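(* Let $\tilde\alpha=(\tilde\alpha_1,\dots,\tilde\alpha_n)\in\mathbb{F}_{2^m}^n$ be a support tuple, let $t$ be a positive integer, and let $C\subseteq\mathbb{F}_2^n$ be a binary Goppa code. Consider the following procedure $\mathrm{GoppaGCD}(\tilde\alpha,t,C)$: (1) Set $\tilde g:=0$ and choose an $\mathbb{F}_2$-basis $B$ of $C$. (2) For each $c\in B$ in turn: set $\hat s_{c,\tilde\alpha}:=\sum_{i\in I_c}\prod_{j\in I_c\setminus\{i\}}(x-\tilde\alpha_j)$ and $\tilde g:=\gcd(\tilde g,\hat s_{c,\tilde\alpha})$; if $\deg(\tilde g)<2t$, return Fail. (3) For $i=1,\dots,n$: while $\tilde g(\tilde\alpha_i)=0$, replace $\tilde g$ by $\tilde g/(x-\tilde\alpha_i)$. (4) If $\deg(\tilde g)<2t$ return Fail; otherwise return $\tilde g$. Then this procedure terminates, and the following are equivalent: (a) $\mathrm{GoppaGCD}(\tilde\alpha,t,C)$ returns a degree-$u$ extension of $\tilde\alpha$ with respect to $C$ for some $u\ge 2t$; (b) $\tilde\alpha$ is degree-$u$ extendable with respect to $C$ for some $u\ge 2t$. Otherwise, the procedure returns Fail.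
   Context: $\mathbb{F}_{2^m}$ is the finite field with $2^m$ elements. A support tuple is $\tilde\alpha\in\mathbb{F}_{2^m}^n$ with pairwise distinct entries. For $c\in\mathbb{F}_2^n$, $I_c=\{i\mid c_i=1\}$. For a support tuple $\alpha$ and a polynomial $g\in\mathbb{F}_{2^m}[x]$ with $g(\alpha_i)\neq 0$ for all $i$ (a Goppa polynomial for $\alpha$), the binary Goppa code is $\Gamma(\alpha,g)=\{c\in\mathbb{F}_2^n\mid \sum_{i\in I_c}(x-\alpha_i)^{-1}=0\text{ in }\mathbb{F}_{2^m}[x]/\langle g\rangle\}$; equivalently $c\in\Gamma(\alpha,g)$ iff $g\mid \sum_{i\in I_c}\prod_{j\in I_c\setminus\{i\}}(x-\alpha_j)$. A binary Goppa code is a code of the form $\Gamma(\alpha,g)$. For $u\in\mathbb{N}_+$, a degree-$u$ extension of $\tilde\alpha$ with respect to $C$ is a Goppa polynomial $\tilde g$ for $\tilde\alpha$ with $\deg\tilde g=u$ and $C\subseteq\Gamma(\tilde\alpha,\tilde g)$; $\tilde\alpha$ is degree-$u$ extendable with respect to $C$ if such an extension exists. The gcd is taken as the monic gcd, with $\gcd(0,h)$ the monic associate of $h$. *)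

theory Defs
  imports "HOL-Computational_Algebra.Polynomial" "HOL-Computational_Algebra.Polynomial_Factorial" "HOL-Computational_Algebra.Euclidean_Algorithm"
          "HOL-Library.Z2" "HOL-Library.Cardinality" "HOL-Library.While_Combinator"
begin

text \<open>Binary vectors of length n: functions nat to bit vanishing outside the indices 0..n-1.
  Support tuples: alpha :: nat to field, injective on 0..n-1 (index i of the paper is i-1 here).\<close>

definition F2vecs :: "nat \<Rightarrow> (nat \<Rightarrow> bit) set" where
  "F2vecs n = {c. \<forall>i\<ge>n. c i = 0}"

definition support_tuple :: "nat \<Rightarrow> (nat \<Rightarrow> 'a) \<Rightarrow> bool" where
  "support_tuple n \<alpha> \<longleftrightarrow> inj_on \<alpha> {..<n}"

definition Ic :: "nat \<Rightarrow> (nat \<Rightarrow> bit) \<Rightarrow> nat set" where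
  "Ic n c = {i. i < n \<and> c i = 1}"

definition shat :: "nat \<Rightarrow> (nat \<Rightarrow> 'a::field) \<Rightarrow> (nat \<Rightarrow> bit) \<Rightarrow> 'a poly" where
  "shat n \<alpha> c = (\<Sum>i\<in>Ic n c. \<Prod>j\<in>Ic n c - {i}. [:- \<alpha> j, 1:])"

definition goppa_poly :: "nat \<Rightarrow> (nat \<Rightarrow> 'a::field) \<Rightarrow> 'a poly \<Rightarrow> bool" where
  "goppa_poly n \<alpha> g \<longleftrightarrow> (\<forall>i<n. poly g (\<alpha> i) \<noteq> 0)"

definition goppa_code :: "nat \<Rightarrow> (nat \<Rightarrow> 'a::field) \<Rightarrow> 'a poly \<Rightarrow> (nat \<Rightarrow> bit) set" where
  "goppa_code n \<alpha> g = {c \<in> F2vecs n. g dvd shat n \<alpha> c}"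

definition binary_goppa_code :: "nat \<Rightarrow> (nat \<Rightarrow> bit) set \<Rightarrow> ('a::field) itself \<Rightarrow> bool" where
  "binary_goppa_code n C _ \<longleftrightarrow>
     (\<exists>(\<alpha> :: nat \<Rightarrow> 'a) g. support_tuple n \<alpha> \<and> goppa_poly n \<alpha> g \<and> C = goppa_code n \<alpha> g)"

definition is_extension :: "nat \<Rightarrow> (nat \<Rightarrow> 'a::field) \<Rightarrow> (nat \<Rightarrow> bit) set \<Rightarrow> nat \<Rightarrow> 'a poly \<Rightarrow> bool" where
  "is_extension n \<alpha> C u g \<longleftrightarrow> goppa_poly n \<alpha> g \<and> degree g = u \<and> C \<subseteq> goppa_code n \<alpha> g"

definition extendable :: "nat \<Rightarrow> (nat \<Rightarrow> 'a::field) \<Rightarrow> (nat \<Rightarrow> bit) set \<Rightarrow> nat \<Rightarrow> bool" where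
  "extendable n \<alpha> C u \<longleftrightarrow> (\<exists>g. is_extension n \<alpha> C u g)"

definition lin_comb :: "(nat \<Rightarrow> bit) list \<Rightarrow> (nat \<Rightarrow> bit) \<Rightarrow> (nat \<Rightarrow> bit)" where
  "lin_comb B a = (\<lambda>j. \<Sum>i<length B. a i * (B ! i) j)"

definition F2_basis :: "(nat \<Rightarrow> bit) set \<Rightarrow> (nat \<Rightarrow> bit) list \<Rightarrow> bool" where
  "F2_basis C B \<longleftrightarrow>
     (\<forall>a. lin_comb B a = (\<lambda>_. 0) \<longrightarrow> (\<forall>i<length B. a i = 0)) \<and>
     C = range (lin_comb B)"

datatype 'a result = Fail | Return 'a

text \<open>Step 2: gcd loop over the basis; None means the procedure returned Fail.\<close>
fun gcd_loop :: "nat \<Rightarrow> nat \<Rightarrow> (nat \<Rightarrow> 'a::field_gcd) \<Rightarrow> 'a poly \<Rightarrow> (nat \<Rightarrow> bit) list \<Rightarrow> 'a poly option" where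
  "gcd_loop n t \<alpha> g [] = Some g"
| "gcd_loop n t \<alpha> g (c # cs) =
     (let g' = gcd g (shat n \<alpha> c) in
      if degree g' < 2 * t then None else gcd_loop n t \<alpha> g' cs)"

text \<open>Step 3: the while loops (None = non-termination).\<close>
definition strip_root :: "'a::field \<Rightarrow> 'a poly \<Rightarrow> 'a poly option" where
  "strip_root a g = while_option (\<lambda>h. poly h a = 0) (\<lambda>h. h div [:- a, 1:]) g"

definition strip_all :: "nat \<Rightarrow> (nat \<Rightarrow> 'a::field) \<Rightarrow> 'a poly \<Rightarrow> 'a poly option" where
  "strip_all n \<alpha> g = fold (\<lambda>i og. Option.bind og (strip_root (\<alpha> i))) [0..<n] (Some g)"

text \<open>The whole procedure GoppaGCD. Outer None = does not terminate;
  Some Fail = returns Fail; Some (Return g) = returns g.\<close>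
definition goppa_gcd :: "nat \<Rightarrow> (nat \<Rightarrow> 'a::field_gcd) \<Rightarrow> nat \<Rightarrow> (nat \<Rightarrow> bit) list \<Rightarrow> 'a poly result option" where
  "goppa_gcd n \<alpha> t B =
     (case gcd_loop n t \<alpha> 0 B of
        None \<Rightarrow> Some Fail
      | Some g \<Rightarrow>
          (case strip_all n \<alpha> g of
             None \<Rightarrow> None
           | Some g' \<Rightarrow> Some (if degree g' < 2 * t then Fail else Return g')))"

end

theory Submission
  imports Defs "HOL-Number_Theory.Residues"
begin

text \<open>A Goppa polynomial \<open>g\<close> is coprime to every \<open>x - \<alpha> i\<close>, so \<open>g\<close> divides
  \<open>shat n \<alpha> c\<close> iff it divides \<open>\<Sum>j<n. c j * (\<Prod>k\<noteq>j. x - \<alpha> k)\<close>, the numerator of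
  \<open>\<Sum>i\<in>I\<^sub>c. 1 / (x - \<alpha> i)\<close> over the full support; in characteristic 2 this numerator is
  \<open>\<bbbF>\<^sub>2\<close>-linear in \<open>c\<close>. Hence the extensions of \<open>\<alpha>\<close> with respect to \<open>C\<close> are exactly the
  Goppa polynomials dividing \<open>G = gcd {shat n \<alpha> c | c \<in> B}\<close>, and \<open>G \<noteq> 0\<close> because
  \<open>shat n \<alpha> c\<close> does not vanish at \<open>\<alpha> k\<close> for \<open>k \<in> I\<^sub>c\<close>. Dividing out the roots \<open>\<alpha> i\<close> of
  \<open>G\<close> terminates (the degree drops) and leaves the largest Goppa divisor \<open>G'\<close> of \<open>G\<close>, so an
  extension of degree at least \<open>2t\<close> exists iff \<open>deg G' \<ge> 2t\<close>. The early exit of the gcd loop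
  is sound because every extension divides each partial gcd.\<close>

section \<open>Linearity of binary Goppa codes\<close>

lemma CHAR_eq_two_if_card_power_of_two:
  assumes "CARD('a::{idom,finite}) = 2 ^ m"
  shows "CHAR('a) = 2"
proof -
  have "prime CHAR('a)"
    by (intro prime_CHAR_semidom finite_imp_CHAR_pos) simp
  moreover have "CHAR('a) dvd 2 ^ m"
    using CHAR_dvd_CARD[where 'a='a] assms by simp
  ultimately show ?thesis
    using prime_dvd_power primes_dvd_imp_eq two_is_prime_nat by blast
qed

lemma of_bit_add:
  assumes "CHAR('a::ring_1) = 2"
  shows "of_bit (x + y) = (of_bit x + of_bit y :: 'a)"
proof -
  have "(1::'a) + 1 = 0"
    using of_nat_CHAR[where 'a='a] assms by simp
  then show ?thesis by (cases x; cases y) simp_all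
qed

lemma of_bit_sum:
  assumes "CHAR('a::ring_1) = 2"
  shows "of_bit (\<Sum>i\<in>A. f i) = (\<Sum>i\<in>A. of_bit (f i) :: 'a)"
proof (induction A rule: infinite_finite_induct)
  case (insert x F)
  then show ?case by (simp only: sum.insert[OF insert.hyps] of_bit_add[OF assms] insert.IH)
qed simp_all

text \<open>Clearing denominators over the whole support rather than over \<open>I\<^sub>c\<close> is what makes the
  numerator additive in \<open>c\<close>.\<close>

definition syndrome_numerator :: "nat \<Rightarrow> (nat \<Rightarrow> 'a::field) \<Rightarrow> (nat \<Rightarrow> bit) \<Rightarrow> 'a poly" where
  "syndrome_numerator n \<alpha> c = (\<Sum>j<n. Polynomial.smult (of_bit (c j)) (\<Prod>k\<in>{..<n} - {j}. [:- \<alpha> k, 1:]))"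

lemma shat_mult_prod_complement:
  "shat n \<alpha> c * (\<Prod>k\<in>{..<n} - Ic n c. [:- \<alpha> k, 1:]) = syndrome_numerator n \<alpha> c"
proof -
  let ?I = "Ic n c"
  have I: "?I \<subseteq> {..<n}" unfolding Ic_def by auto
  have "shat n \<alpha> c * (\<Prod>k\<in>{..<n} - ?I. [:- \<alpha> k, 1:]) =
      (\<Sum>i\<in>?I. (\<Prod>j\<in>?I - {i}. [:- \<alpha> j, 1:]) * (\<Prod>k\<in>{..<n} - ?I. [:- \<alpha> k, 1:]))"
    unfolding shat_def by (simp add: sum_distrib_right)
  also have "\<dots> = (\<Sum>i\<in>?I. \<Prod>k\<in>{..<n} - {i}. [:- \<alpha> k, 1:])"
  proof (rule sum.cong[OF refl])
    fix i assume "i \<in> ?I"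
    then have split: "{..<n} - {i} = (?I - {i}) \<union> ({..<n} - ?I)" using I by auto
    have "finite (?I - {i})" using I finite_subset by blast
    then show "(\<Prod>j\<in>?I - {i}. [:- \<alpha> j, 1:]) * (\<Prod>k\<in>{..<n} - ?I. [:- \<alpha> k, 1:]) =
        (\<Prod>k\<in>{..<n} - {i}. [:- \<alpha> k, 1:])"
      unfolding split by (subst prod.union_disjoint) auto
  qed
  also have "\<dots> = syndrome_numerator n \<alpha> c"
    unfolding syndrome_numerator_def Ic_def
    by (rule sum.mono_neutral_cong_left) auto
  finally show ?thesis .
qed

lemma syndrome_numerator_sum:
  assumes "CHAR('a::field) = 2"
  shows "syndrome_numerator n (\<alpha> :: nat \<Rightarrow> 'a) (\<lambda>j. \<Sum>i\<in>A. f i j) =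
    (\<Sum>i\<in>A. syndrome_numerator n \<alpha> (f i))"
  unfolding syndrome_numerator_def of_bit_sum[OF assms] smult_sum
  by (rule sum.swap)

lemma coprime_linear_if_not_root:
  fixes g :: "'a::field_gcd poly"
  assumes "poly g a \<noteq> 0"
  shows "coprime g [:- a, 1:]"
  using prime_elem_imp_coprime[OF prime_elem_linear_field_poly[of 1 "- a"], of g] assms
  by (simp add: poly_eq_0_iff_dvd coprime_commute)

lemma goppa_poly_dvd_shat_iff:
  fixes g :: "'a::field_gcd poly"
  assumes "goppa_poly n \<alpha> g"
  shows "g dvd shat n \<alpha> c \<longleftrightarrow> g dvd syndrome_numerator n \<alpha> c"
proof -
  have "coprime g (\<Prod>k\<in>{..<n} - Ic n c. [:- \<alpha> k, 1:])"
    using assms by (intro prod_coprime_right coprime_linear_if_not_root) (auto simp: goppa_poly_def)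
  then show ?thesis
    by (metis coprime_dvd_mult_left_iff shat_mult_prod_complement)
qed

lemma lin_comb_mem_goppa_code:
  fixes g :: "'a::field_gcd poly"
  assumes "CHAR('a) = 2" "goppa_poly n \<alpha> g" "set B \<subseteq> goppa_code n \<alpha> g"
  shows "lin_comb B a \<in> goppa_code n \<alpha> g"
proof -
  have B: "B ! i \<in> F2vecs n" "g dvd syndrome_numerator n \<alpha> (B ! i)" if "i < length B" for i
    using assms(3) nth_mem[OF that] goppa_poly_dvd_shat_iff[OF assms(2)]
    by (auto simp: goppa_code_def)
  have "lin_comb B a j = 0" if "j \<ge> n" for j
    unfolding lin_comb_def using B(1) that by (intro sum.neutral) (simp add: F2vecs_def)
  then have "lin_comb B a \<in> F2vecs n"
    by (simp add: F2vecs_def)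
  moreover have "g dvd syndrome_numerator n \<alpha> (\<lambda>j. a i * (B ! i) j)" if "i < length B" for i
    using B(2)[OF that] by (cases "a i") (simp_all add: syndrome_numerator_def)
  then have "g dvd (\<Sum>i<length B. syndrome_numerator n \<alpha> (\<lambda>j. a i * (B ! i) j))"
    by (intro dvd_sum) simp
  then have "g dvd syndrome_numerator n \<alpha> (lin_comb B a)"
    unfolding lin_comb_def syndrome_numerator_sum[OF assms(1)] .
  ultimately show ?thesis
    using goppa_poly_dvd_shat_iff[OF assms(2)] by (simp add: goppa_code_def)
qed

lemma lin_comb_unit_vector:
  assumes "i < length B"
  shows "lin_comb B (\<lambda>k. if k = i then 1 else 0) = B ! i"
  unfolding lin_comb_def
proof
  fix j
  have "(\<Sum>k<length B. (if k = i then 1 else 0) * (B ! k) j) = (\<Sum>k<length B. if k = i then (B ! k) j else 0)"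
    by (rule sum.cong) simp_all
  also have "\<dots> = (B ! i) j"
    using assms by simp
  finally show "(\<Sum>k<length B. (if k = i then 1 else 0) * (B ! k) j) = (B ! i) j" .
qed

lemma F2_basis_set_subset:
  assumes "F2_basis C B"
  shows "set B \<subseteq> C"
proof
  fix c assume "c \<in> set B"
  then obtain i where "i < length B" "c = B ! i"
    by (auto simp: in_set_conv_nth)
  then show "c \<in> C"
    using assms lin_comb_unit_vector by (metis F2_basis_def rangeI)
qed

lemma F2_basis_nonzero:
  assumes "F2_basis C B" "c \<in> set B"
  shows "c \<noteq> (\<lambda>_. 0)"
proof
  assume c0: "c = (\<lambda>_. 0)"
  obtain i where i: "i < length B" "c = B ! i"
    using assms(2) by (auto simp: in_set_conv_nth)
  let ?e = "\<lambda>k. if k = i then 1 else (0::bit)"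
  have "lin_comb B ?e = (\<lambda>_. 0)"
    using lin_comb_unit_vector[OF i(1)] i(2) c0 by simp
  then have "?e i = 0"
    using assms(1) i(1) unfolding F2_basis_def by blast
  then show False by simp
qed

lemma F2_basis_Nil:
  assumes "F2_basis C []"
  shows "C = {\<lambda>_. 0}"
  using assms by (auto simp: F2_basis_def lin_comb_def)

lemma subset_goppa_code_iff_basis_subset:
  fixes g :: "'a::field_gcd poly"
  assumes "CHAR('a) = 2" "goppa_poly n \<alpha> g" "F2_basis C B"
  shows "C \<subseteq> goppa_code n \<alpha> g \<longleftrightarrow> set B \<subseteq> goppa_code n \<alpha> g"
proof
  assume "C \<subseteq> goppa_code n \<alpha> g"
  then show "set B \<subseteq> goppa_code n \<alpha> g"
    using F2_basis_set_subset[OF assms(3)] by blast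
next
  assume "set B \<subseteq> goppa_code n \<alpha> g"
  then show "C \<subseteq> goppa_code n \<alpha> g"
    using assms(3) lin_comb_mem_goppa_code[OF assms(1,2)] unfolding F2_basis_def by blast
qed

lemma is_extension_iff_dvd_basis_shat:
  fixes g :: "'a::field_gcd poly"
  assumes "CHAR('a) = 2" "F2_basis C B" "C \<subseteq> F2vecs n"
  shows "is_extension n \<alpha> C u g \<longleftrightarrow>
    goppa_poly n \<alpha> g \<and> degree g = u \<and> (\<forall>c\<in>set B. g dvd shat n \<alpha> c)"
  using subset_goppa_code_iff_basis_subset[OF assms(1) _ assms(2)] F2_basis_set_subset[OF assms(2)] assms(3)
  unfolding is_extension_def goppa_code_def by blast

lemma shat_nonzero:
  fixes \<alpha> :: "nat \<Rightarrow> 'a::field"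
  assumes "support_tuple n \<alpha>" "c \<in> F2vecs n" "c \<noteq> (\<lambda>_. 0)"
  shows "shat n \<alpha> c \<noteq> 0"
proof -
  let ?I = "Ic n c"
  obtain k where "c k \<noteq> 0" using assms(3) by blast
  with assms(2) have k: "k \<in> ?I"
    by (auto simp: F2vecs_def Ic_def not_le[symmetric])
  have I: "?I \<subseteq> {..<n}" "finite ?I" by (auto simp: Ic_def)
  have "poly (shat n \<alpha> c) (\<alpha> k) = (\<Sum>i\<in>?I. \<Prod>j\<in>?I - {i}. \<alpha> k - \<alpha> j)"
    unfolding shat_def by (simp add: poly_sum poly_prod)
  also have "\<dots> = (\<Prod>j\<in>?I - {k}. \<alpha> k - \<alpha> j)"
    using k I(2) by (subst sum.remove[OF I(2) k], subst sum.neutral) (auto simp: prod_zero_iff)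
  also have "\<dots> \<noteq> 0"
    using assms(1) k I by (auto simp: prod_zero_iff support_tuple_def inj_on_def)
  finally show ?thesis by auto
qed

section \<open>Removing the roots on the support\<close>

lemma dvd_div_linear_if_not_root:
  fixes g k :: "'a::field_gcd poly"
  assumes "poly g a \<noteq> 0" "g dvd k" "poly k a = 0"
  shows "g dvd k div [:- a, 1:]"
proof -
  obtain q where k: "k = [:- a, 1:] * q"
    using assms(3) by (auto simp: poly_eq_0_iff_dvd)
  have "g dvd q * [:- a, 1:]"
    using assms(2) k by (simp add: mult.commute)
  then have "g dvd q"
    using coprime_linear_if_not_root[OF assms(1)] coprime_dvd_mult_left_iff by blast
  moreover have "k div [:- a, 1:] = q"
    unfolding k by (rule nonzero_mult_div_cancel_left) simp
  ultimately show ?thesis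
    by simp
qed

lemma degree_div_linear_less:
  fixes k :: "'a::field poly"
  assumes "k \<noteq> 0" "poly k a = 0"
  shows "degree (k div [:- a, 1:]) < degree k"
proof (rule degree_div_less)
  show "0 < degree k"
  proof (rule ccontr)
    assume "\<not> 0 < degree k"
    then obtain c where "k = [:c:]"
      by (auto elim: degree_eq_zeroE)
    then show False
      using assms by simp
  qed
qed simp

lemma strip_root_Some:
  fixes h :: "'a::field_gcd poly"
  assumes "h \<noteq> 0"
  obtains h' where "strip_root a h = Some h'" "h' \<noteq> 0" "h' dvd h" "poly h' a \<noteq> 0"
    "\<And>g. poly g a \<noteq> 0 \<Longrightarrow> g dvd h \<Longrightarrow> g dvd h'"
proof -
  define P where "P k \<longleftrightarrow> k \<noteq> 0 \<and> k dvd h \<and> (\<forall>g. poly g a \<noteq> 0 \<longrightarrow> g dvd h \<longrightarrow> g dvd k)" for k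
  have step: "P (k div [:- a, 1:])" if "P k" "poly k a = 0" for k
  proof -
    have k: "[:- a, 1:] * (k div [:- a, 1:]) = k"
      using that(2) by (metis dvd_mult_div_cancel poly_eq_0_iff_dvd)
    have "k div [:- a, 1:] \<noteq> 0"
      using k that(1) unfolding P_def by auto
    moreover have "k div [:- a, 1:] dvd h"
      using k that(1) unfolding P_def by (metis dvd_triv_right dvd_trans)
    moreover have "g dvd k div [:- a, 1:]" if "poly g a \<noteq> 0" "g dvd h" for g
      using \<open>P k\<close> \<open>poly k a = 0\<close> that dvd_div_linear_if_not_root unfolding P_def by blast
    ultimately show ?thesis
      unfolding P_def by blast
  qed
  have init: "P h"
    using assms unfolding P_def by simp
  have "\<exists>h'. while_option (\<lambda>k. poly k a = 0) (\<lambda>k. k div [:- a, 1:]) h = Some h'"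
  proof (rule measure_while_option_Some[of P _ _ degree, OF _ init])
    fix k assume "P k" "poly k a = 0"
    moreover have "k \<noteq> 0"
      using \<open>P k\<close> unfolding P_def by simp
    ultimately show "P (k div [:- a, 1:]) \<and> degree (k div [:- a, 1:]) < degree k"
      using step degree_div_linear_less by simp
  qed
  then obtain h' where w: "while_option (\<lambda>k. poly k a = 0) (\<lambda>k. k div [:- a, 1:]) h = Some h'" ..
  have "P h'"
    using while_option_rule[of P, OF step w init] .
  moreover have "poly h' a \<noteq> 0"
    using while_option_stop[OF w] by simp
  ultimately show ?thesis
    using that w unfolding strip_root_def P_def by blast
qed

lemma fold_strip_root_Some:
  fixes h :: "'a::field_gcd poly"
  assumes "h \<noteq> 0"
  shows "\<exists>h'. fold (\<lambda>i og. Option.bind og (strip_root (\<alpha> i))) xs (Some h) = Some h' \<and>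
    h' \<noteq> 0 \<and> h' dvd h \<and> (\<forall>i\<in>set xs. poly h' (\<alpha> i) \<noteq> 0) \<and>
    (\<forall>g. (\<forall>i\<in>set xs. poly g (\<alpha> i) \<noteq> 0) \<longrightarrow> g dvd h \<longrightarrow> g dvd h')"
  using assms
proof (induction xs arbitrary: h)
  case (Cons x xs)
  obtain h1 where h1: "strip_root (\<alpha> x) h = Some h1" "h1 \<noteq> 0" "h1 dvd h" "poly h1 (\<alpha> x) \<noteq> 0"
    "\<And>g. poly g (\<alpha> x) \<noteq> 0 \<Longrightarrow> g dvd h \<Longrightarrow> g dvd h1"
    using strip_root_Some[OF Cons.prems] by blast
  moreover obtain h' where "fold (\<lambda>i og. Option.bind og (strip_root (\<alpha> i))) xs (Some h1) = Some h'"
    "h' \<noteq> 0" "h' dvd h1" "\<forall>i\<in>set xs. poly h' (\<alpha> i) \<noteq> 0"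
    "\<forall>g. (\<forall>i\<in>set xs. poly g (\<alpha> i) \<noteq> 0) \<longrightarrow> g dvd h1 \<longrightarrow> g dvd h'"
    using Cons.IH[OF h1(2)] by blast
  moreover have "poly h' (\<alpha> x) \<noteq> 0"
    using h1(4) \<open>h' dvd h1\<close> by (auto simp: poly_eq_0_iff_dvd dest: dvd_trans)
  ultimately show ?case
    by (auto intro: dvd_trans)
qed simp

lemma strip_all_Some:
  fixes h :: "'a::field_gcd poly"
  assumes "h \<noteq> 0"
  obtains h' where "strip_all n \<alpha> h = Some h'" "h' \<noteq> 0" "h' dvd h" "goppa_poly n \<alpha> h'"
    "\<And>g. goppa_poly n \<alpha> g \<Longrightarrow> g dvd h \<Longrightarrow> g dvd h'"
  using fold_strip_root_Some[OF assms, of \<alpha> "[0..<n]"]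
  unfolding strip_all_def goppa_poly_def by auto

lemma gcd_loop_Some_dvd_iff:
  assumes "gcd_loop n t \<alpha> g cs = Some G"
  shows "h dvd G \<longleftrightarrow> h dvd g \<and> (\<forall>c\<in>set cs. h dvd shat n \<alpha> c)"
  using assms
proof (induction cs arbitrary: g)
  case (Cons c cs)
  then have "gcd_loop n t \<alpha> (gcd g (shat n \<alpha> c)) cs = Some G"
    by (simp add: Let_def split: if_splits)
  then show ?case
    using Cons.IH by simp
qed simp

lemma gcd_loop_neq_None:
  assumes "2 * t \<le> degree h" "h dvd g" "\<forall>c\<in>set cs. h dvd shat n \<alpha> c \<and> shat n \<alpha> c \<noteq> 0"
  shows "gcd_loop n t \<alpha> g cs \<noteq> None"
  using assms(2,3)
proof (induction cs arbitrary: g)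
  case (Cons c cs)
  let ?g' = "gcd g (shat n \<alpha> c)"
  have "degree h \<le> degree ?g'"
    using Cons.prems by (intro dvd_imp_degree_le) auto
  then show ?case
    using Cons assms(1) by (simp add: Let_def)
qed simp

lemma goppa_gcd_Return_or_Fail:
  fixes \<alpha> :: "nat \<Rightarrow> 'a::field_gcd"
  assumes "B \<noteq> []" "\<forall>c\<in>set B. shat n \<alpha> c \<noteq> 0"
  shows "(\<exists>G. goppa_gcd n \<alpha> t B = Some (Return G) \<and> goppa_poly n \<alpha> G \<and> 2 * t \<le> degree G \<and>
            (\<forall>c\<in>set B. G dvd shat n \<alpha> c))
       \<or> (goppa_gcd n \<alpha> t B = Some Fail \<and>
            \<not> (\<exists>g. goppa_poly n \<alpha> g \<and> 2 * t \<le> degree g \<and> (\<forall>c\<in>set B. g dvd shat n \<alpha> c)))"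
proof (cases "gcd_loop n t \<alpha> 0 B")
  case None
  have "\<not> (\<exists>g. goppa_poly n \<alpha> g \<and> 2 * t \<le> degree g \<and> (\<forall>c\<in>set B. g dvd shat n \<alpha> c))"
  proof clarify
    fix g assume "2 * t \<le> degree g" "\<forall>c\<in>set B. g dvd shat n \<alpha> c"
    then have "gcd_loop n t \<alpha> 0 B \<noteq> None"
      using assms(2) by (intro gcd_loop_neq_None[of t g]) auto
    then show False
      using None by simp
  qed
  then show ?thesis
    by (simp add: goppa_gcd_def None)
next
  case (Some G)
  have G_dvd_iff: "h dvd G \<longleftrightarrow> (\<forall>c\<in>set B. h dvd shat n \<alpha> c)" for h
    using gcd_loop_Some_dvd_iff[OF Some] by simp
  have "G \<noteq> 0"
    using G_dvd_iff[of G] assms by (metis dvd_0_left dvd_refl list.set_sel(1))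
  then obtain G' where G': "strip_all n \<alpha> G = Some G'" "G' \<noteq> 0" "G' dvd G" "goppa_poly n \<alpha> G'"
    "\<And>g. goppa_poly n \<alpha> g \<Longrightarrow> g dvd G \<Longrightarrow> g dvd G'"
    by (rule strip_all_Some) blast
  have result: "goppa_gcd n \<alpha> t B = Some (if degree G' < 2 * t then Fail else Return G')"
    by (simp add: goppa_gcd_def Some G'(1))
  show ?thesis
  proof (cases "degree G' < 2 * t")
    case True
    have "\<not> (\<exists>g. goppa_poly n \<alpha> g \<and> 2 * t \<le> degree g \<and> (\<forall>c\<in>set B. g dvd shat n \<alpha> c))"
    proof clarify
      fix g assume "goppa_poly n \<alpha> g" "2 * t \<le> degree g" "\<forall>c\<in>set B. g dvd shat n \<alpha> c"
      then have "degree g \<le> degree G'"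
        using G'(2,5) G_dvd_iff by (simp add: dvd_imp_degree_le)
      then show False
        using True \<open>2 * t \<le> degree g\<close> by simp
    qed
    then show ?thesis
      using result True by simp
  next
    case False
    then show ?thesis
      using result G'(3,4) G_dvd_iff[of G'] by (intro disjI1 exI[of _ G']) simp
  qed
qed

theorem proposition6p8:
  fixes \<alpha> :: "nat \<Rightarrow> 'a::{field_gcd, finite}" and n m t :: nat
    and C :: "(nat \<Rightarrow> bit) set" and B :: "(nat \<Rightarrow> bit) list"
  assumes card: "CARD('a) = 2 ^ m"
    and supp: "support_tuple n \<alpha>"
    and tpos: "t > 0"
    and goppa: "binary_goppa_code n C TYPE('a)"
    and nonzero: "C \<noteq> {\<lambda>_. 0}"
    and basis: "F2_basis C B"
  shows "goppa_gcd n \<alpha> t B \<noteq> None \<and>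
         ((\<exists>u\<ge>2 * t. \<exists>g. goppa_gcd n \<alpha> t B = Some (Return g) \<and> is_extension n \<alpha> C u g)
            \<longleftrightarrow> (\<exists>u\<ge>2 * t. extendable n \<alpha> C u)) \<and>
         (\<not> (\<exists>u\<ge>2 * t. \<exists>g. goppa_gcd n \<alpha> t B = Some (Return g) \<and> is_extension n \<alpha> C u g)
            \<longrightarrow> goppa_gcd n \<alpha> t B = Some Fail)"
proof -
  have char: "CHAR('a) = 2"
    using card by (rule CHAR_eq_two_if_card_power_of_two)
  have C_F2vecs: "C \<subseteq> F2vecs n"
    using goppa by (auto simp: binary_goppa_code_def goppa_code_def)
  have B_ne: "B \<noteq> []"
    using basis nonzero F2_basis_Nil by blast
  have shat_ne: "\<forall>c\<in>set B. shat n \<alpha> c \<noteq> 0"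
    using shat_nonzero[OF supp] F2_basis_nonzero[OF basis] F2_basis_set_subset[OF basis] C_F2vecs
    by blast
  from goppa_gcd_Return_or_Fail[OF B_ne shat_ne, of t] show ?thesis
    unfolding extendable_def is_extension_iff_dvd_basis_shat[OF char basis C_F2vecs] by auto
qed

end
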